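(* Let $J$ be a non-degenerate interval and $f_{1,\infty}$ a commutative $m$-periodic sequence of continuous surjective self-maps of $J$. If $(J,f_{1,\infty})$ is weakly mixing, then $(J,f_{1,\infty})$ is Devaney chaotic.
   Context: Commutative: $f_i\circ f_j=f_j\circ f_i$ for all $i,j$. $m$-periodic: $f_{n+m}=f_n$ for all $n$. Write $f_1^n=f_n\circ\cdots\circ f_1$. Weakly mixing: for all non-empty open $U_1,U_2,V_1,V_2$ there is $n$ with $f_1^n(U_i)\cap V_i\ne\emptyset$, $i=1,2$. Topologically transitive: for all non-empty open $U,V$ some $n$ with $f_1^n(U)\cap V\ne\emptyset$. A point $x$ is periodic if there is $n$ with $f_1^{nk}(x)=x$ for every $k\in\mathbb{N}$. Sensitive: there is $\delta>0$ such that for every $x$ and every neighbourhood $U$ of $x$ there are $y\in U$, $n\in\mathbb{N}$ with $|f_1^n(x)-f_1^n(y)|>\delta$. Devaney chaotic: topologically transitive, dense set of periodic points, and sensitive. *)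

theory Defs
  imports "HOL-Analysis.Analysis"
begin

text \<open>Non-autonomous system on J given by a sequence f 1, f 2, ... (index 0 unused).
  iter_seq f n = f n o ... o f 1, with iter_seq f 0 = id.\<close>
fun iter_seq :: "(nat \<Rightarrow> real \<Rightarrow> real) \<Rightarrow> nat \<Rightarrow> real \<Rightarrow> real" where
  "iter_seq f 0 = id"
| "iter_seq f (Suc n) = f (Suc n) \<circ> iter_seq f n"

definition nondegenerate_interval :: "real set \<Rightarrow> bool" where
  "nondegenerate_interval J \<longleftrightarrow> is_interval J \<and> (\<exists>a\<in>J. \<exists>b\<in>J. a < b)"

definition commutative_seq :: "real set \<Rightarrow> (nat \<Rightarrow> real \<Rightarrow> real) \<Rightarrow> bool" where
  "commutative_seq J f \<longleftrightarrow> (\<forall>i\<ge>1. \<forall>j\<ge>1. \<forall>x\<in>J. f i (f j x) = f j (f i x))"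

definition periodic_seq :: "real set \<Rightarrow> nat \<Rightarrow> (nat \<Rightarrow> real \<Rightarrow> real) \<Rightarrow> bool" where
  "periodic_seq J m f \<longleftrightarrow> m \<ge> 1 \<and> (\<forall>n\<ge>1. \<forall>x\<in>J. f (n + m) x = f n x)"

definition weakly_mixing :: "real set \<Rightarrow> (nat \<Rightarrow> real \<Rightarrow> real) \<Rightarrow> bool" where
  "weakly_mixing J f \<longleftrightarrow>
    (\<forall>U1 U2 V1 V2. openin (top_of_set J) U1 \<and> U1 \<noteq> {} \<and> openin (top_of_set J) U2 \<and> U2 \<noteq> {}
       \<and> openin (top_of_set J) V1 \<and> V1 \<noteq> {} \<and> openin (top_of_set J) V2 \<and> V2 \<noteq> {}
       \<longrightarrow> (\<exists>n\<ge>1. iter_seq f n ` U1 \<inter> V1 \<noteq> {} \<and> iter_seq f n ` U2 \<inter> V2 \<noteq> {}))"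

definition top_transitive :: "real set \<Rightarrow> (nat \<Rightarrow> real \<Rightarrow> real) \<Rightarrow> bool" where
  "top_transitive J f \<longleftrightarrow>
    (\<forall>U V. openin (top_of_set J) U \<and> U \<noteq> {} \<and> openin (top_of_set J) V \<and> V \<noteq> {}
       \<longrightarrow> (\<exists>n\<ge>1. iter_seq f n ` U \<inter> V \<noteq> {}))"

definition periodic_point :: "(nat \<Rightarrow> real \<Rightarrow> real) \<Rightarrow> real \<Rightarrow> bool" where
  "periodic_point f x \<longleftrightarrow> (\<exists>n\<ge>1. \<forall>k\<ge>1. iter_seq f (n * k) x = x)"

definition sensitive :: "real set \<Rightarrow> (nat \<Rightarrow> real \<Rightarrow> real) \<Rightarrow> bool" where
  "sensitive J f \<longleftrightarrow> (\<exists>\<delta>>0. \<forall>x\<in>J. \<forall>U. openin (top_of_set J) U \<and> x \<in> U \<longrightarrow>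
      (\<exists>y\<in>U. \<exists>n\<ge>1. \<bar>iter_seq f n x - iter_seq f n y\<bar> > \<delta>))"

definition devaney_chaotic :: "real set \<Rightarrow> (nat \<Rightarrow> real \<Rightarrow> real) \<Rightarrow> bool" where
  "devaney_chaotic J f \<longleftrightarrow> top_transitive J f
     \<and> J \<subseteq> closure {x\<in>J. periodic_point f x}
     \<and> sensitive J f"

end

theory Submission
  imports Defs
begin

text \<open>Weak mixing gives transitivity at once, and sensitivity because a single time n must send
  every open set close to two distant points. Commutativity lets one merge two mixing requirements
  into one on smaller open sets, so any finitely many pairs of open sets are mixed at a common time,
  and by periodicity that time can be pushed to a multiple N of m. Choosing three consecutive small
  intervals L < I < R, some multiple N of m moves a point of I into L and another into R, so
  iter_seq f N - id changes sign on I and has a zero there; as m divides N, this fixed point of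
  iter_seq f N is periodic.\<close>

lemma iter_seq_add:
  "iter_seq f (a + b) = iter_seq (\<lambda>k. f (a + k)) b \<circ> iter_seq f a"
  by (induction b) (simp_all add: comp_assoc)

lemma iter_seq_in:
  assumes "\<And>n. n \<ge> 1 \<Longrightarrow> f n ` J \<subseteq> J" and "x \<in> J"
  shows "iter_seq f n x \<in> J"
  using assms by (induction n) auto

lemma iter_seq_image:
  assumes "\<And>n. n \<ge> 1 \<Longrightarrow> f n ` J = J"
  shows "iter_seq f n ` J = J"
proof (induction n)
  case (Suc n)
  have "iter_seq f (Suc n) ` J = f (Suc n) ` iter_seq f n ` J" by (simp add: image_comp)
  then show ?case using Suc assms[of "Suc n"] by simp
qed simp

lemma continuous_on_iter_seq:
  assumes "\<And>n. n \<ge> 1 \<Longrightarrow> continuous_on J (f n)" and "\<And>n. n \<ge> 1 \<Longrightarrow> f n ` J \<subseteq> J"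
  shows "continuous_on J (iter_seq f n)"
proof (induction n)
  case (Suc n)
  have "iter_seq f n ` J \<subseteq> J" using iter_seq_in[of f J, OF assms(2)] by blast
  then show ?case using continuous_on_compose2[OF assms(1) Suc] by (simp add: o_def)
qed simp

lemma iter_seq_cong_on:
  assumes "\<And>n. n \<ge> 1 \<Longrightarrow> f n ` J \<subseteq> J"
    and "\<And>n y. n \<ge> 1 \<Longrightarrow> y \<in> J \<Longrightarrow> g n y = f n y" and "x \<in> J"
  shows "iter_seq g n x = iter_seq f n x"
  using assms(3) by (induction n) (auto simp: assms(2) iter_seq_in[of f J, OF assms(1)])

lemma iter_seq_commute:
  assumes "commutative_seq J f" and "\<And>n. n \<ge> 1 \<Longrightarrow> f n ` J \<subseteq> J" and "x \<in> J"
  shows "iter_seq f n (iter_seq f k x) = iter_seq f k (iter_seq f n x)"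
proof -
  have f_commute: "f i (iter_seq f k y) = iter_seq f k (f i y)" if "i \<ge> 1" "y \<in> J" for i y
    using that assms(1) iter_seq_in[of f J, OF assms(2)] assms(2)
    by (induction k) (auto simp: commutative_seq_def)
  show ?thesis
    using assms(3) by (induction n) (simp_all add: f_commute iter_seq_in[of f J, OF assms(2)])
qed

lemma periodic_seq_shift:
  assumes "periodic_seq J m f" and "n \<ge> 1" and "x \<in> J"
  shows "f (q * m + n) x = f n x"
proof (induction q)
  case (Suc q)
  have "f (Suc q * m + n) x = f ((q * m + n) + m) x" by (simp add: algebra_simps)
  also have "\<dots> = f (q * m + n) x" using assms unfolding periodic_seq_def by simp
  finally show ?case using Suc by simp
qed simp

lemma iter_seq_add_periodic:
  assumes "periodic_seq J m f" and "\<And>n. n \<ge> 1 \<Longrightarrow> f n ` J \<subseteq> J" and "x \<in> J"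
  shows "iter_seq f (a + b) x = iter_seq (\<lambda>k. f (a mod m + k)) b (iter_seq f a x)"
proof -
  have "iter_seq (\<lambda>k. f (a + k)) b y = iter_seq (\<lambda>k. f (a mod m + k)) b y" if "y \<in> J" for y
  proof (rule iter_seq_cong_on[OF _ _ that])
    show "f (a mod m + n) ` J \<subseteq> J" if "n \<ge> 1" for n :: nat using assms(2) that by simp
    fix n :: nat and z assume "n \<ge> 1" "z \<in> J"
    then show "f (a + n) z = f (a mod m + n) z"
      using periodic_seq_shift[OF assms(1), of "a mod m + n" z "a div m"] by simp
  qed
  then show ?thesis using iter_seq_in[of f J, OF assms(2,3)] by (simp add: iter_seq_add)
qed

lemma iter_seq_add_period_multiple:
  assumes "periodic_seq J m f" and "\<And>n. n \<ge> 1 \<Longrightarrow> f n ` J \<subseteq> J" and "m dvd a" and "x \<in> J"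
  shows "iter_seq f (a + b) x = iter_seq f b (iter_seq f a x)"
  using iter_seq_add_periodic[OF assms(1,2,4), of a b] assms(3) by simp

lemma periodic_pointI:
  assumes "periodic_seq J m f" and "\<And>n. n \<ge> 1 \<Longrightarrow> f n ` J \<subseteq> J"
    and "m dvd N" and "N \<ge> 1" and "x \<in> J" and "iter_seq f N x = x"
  shows "periodic_point f x"
proof -
  have "iter_seq f (N * k) x = x" for k
  proof (induction k)
    case (Suc k)
    then show ?case
      using iter_seq_add_period_multiple[OF assms(1-3,5), of "N * k"] assms(6) by simp
  qed simp
  then show ?thesis unfolding periodic_point_def using assms(4) by blast
qed

lemma fixed_point_in_segment:
  fixes g :: "real \<Rightarrow> real"
  assumes "continuous_on (closed_segment y1 y2) g" and "g y1 \<le> y1" and "y2 \<le> g y2"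
  obtains x where "x \<in> closed_segment y1 y2" and "g x = x"
proof -
  have "0 \<in> closed_segment (g y1 - y1) (g y2 - y2)"
    using assms(2,3) by (simp add: closed_segment_eq_real_ivl1)
  moreover have "continuous_on (closed_segment y1 y2) (\<lambda>x. g x - x)"
    by (intro continuous_intros assms(1))
  ultimately show ?thesis
    using IVT'_closed_segment_real[of 0 "\<lambda>x. g x - x"] that by auto
qed

lemma nondegenerate_interval_segment_near:
  assumes "nondegenerate_interval J" and "x \<in> J" and "e > 0"
  obtains u v where "u < v" and "{u..v} \<subseteq> J" and "{u..v} \<subseteq> ball x e"
proof -
  obtain a b where ab: "a \<in> J" "b \<in> J" "a < b" and "is_interval J"
    using assms(1) unfolding nondegenerate_interval_def by blast
  then have segment: "{p..q} \<subseteq> J" if "p \<in> J" "q \<in> J" for p q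
    using that unfolding is_interval_1 by (meson atLeastAtMost_iff subsetI)
  have near: "{p..q} \<subseteq> ball x e" if "x - e < p" "q < x + e" for p q
    using that by (auto simp: dist_real_def)
  show ?thesis
  proof (cases "x < b")
    case True
    show ?thesis
    proof (rule that)
      show "x < min b (x + e/2)" using True assms(3) by simp
      show "{x..min b (x + e/2)} \<subseteq> J" using segment[OF assms(2) ab(2)] by auto
      show "{x..min b (x + e/2)} \<subseteq> ball x e" using assms(3) by (intro near) auto
    qed
  next
    case False
    show ?thesis
    proof (rule that)
      show "max a (x - e/2) < x" using False ab assms(3) by simp
      show "{max a (x - e/2)..x} \<subseteq> J" using segment[OF ab(1) assms(2)] by auto
      show "{max a (x - e/2)..x} \<subseteq> ball x e" using assms(3) by (intro near) auto
    qed
  qed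
qed

lemma weakly_mixing_imp_top_transitive:
  assumes "weakly_mixing J f"
  shows "top_transitive J f"
  unfolding top_transitive_def
proof (intro allI impI)
  fix U V
  assume "openin (top_of_set J) U \<and> U \<noteq> {} \<and> openin (top_of_set J) V \<and> V \<noteq> {}"
  then show "\<exists>n\<ge>1. iter_seq f n ` U \<inter> V \<noteq> {}"
    using assms[unfolded weakly_mixing_def, rule_format, of U U V V] by blast
qed

lemma weakly_mixing_imp_sensitive:
  assumes wm: "weakly_mixing J f" and "a \<in> J" and "b \<in> J" and "a < b"
  shows "sensitive J f"
  unfolding sensitive_def
proof (intro exI[of _ "(b - a) / 4"] conjI ballI allI impI)
  show "(b - a) / 4 > 0" using assms by simp
  define d where "d = (b - a) / 4"
  fix x U assume "x \<in> J" and U: "openin (top_of_set J) U \<and> x \<in> U"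
  have "openin (top_of_set J) (J \<inter> ball c d)" for c by auto
  moreover have "J \<inter> ball a d \<noteq> {}" "J \<inter> ball b d \<noteq> {}"
    using assms by (auto simp: d_def)
  ultimately obtain n where "n \<ge> 1"
    "iter_seq f n ` U \<inter> (J \<inter> ball a d) \<noteq> {}" "iter_seq f n ` U \<inter> (J \<inter> ball b d) \<noteq> {}"
    using wm[unfolded weakly_mixing_def, rule_format, of U U "J \<inter> ball a d" "J \<inter> ball b d"] U
    by blast
  then obtain y1 y2 where "y1 \<in> U" "y2 \<in> U"
    and "\<bar>iter_seq f n y1 - a\<bar> < d" "\<bar>iter_seq f n y2 - b\<bar> < d"
    by (auto simp: dist_real_def abs_minus_commute)
  moreover have "b - a = 4 * d" by (simp add: d_def)
  ultimately have "d < \<bar>iter_seq f n x - iter_seq f n y1\<bar> \<or> d < \<bar>iter_seq f n x - iter_seq f n y2\<bar>"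
    by linarith
  then show "\<exists>y\<in>U. \<exists>n\<ge>1. \<bar>iter_seq f n x - iter_seq f n y\<bar> > (b - a) / 4"
    using \<open>n \<ge> 1\<close> \<open>y1 \<in> U\<close> \<open>y2 \<in> U\<close> unfolding d_def by blast
qed

locale commuting_system =
  fixes J :: "real set" and f :: "nat \<Rightarrow> real \<Rightarrow> real"
  assumes continuous: "\<And>n. n \<ge> 1 \<Longrightarrow> continuous_on J (f n)"
    and maps_into: "\<And>n. n \<ge> 1 \<Longrightarrow> f n ` J \<subseteq> J"
    and commutative: "commutative_seq J f"
begin

lemma openin_preimage_iter_seq:
  assumes "openin (top_of_set J) W"
  shows "openin (top_of_set J) (J \<inter> iter_seq f n -` W)"
  using continuous_openin_preimage[OF continuous_on_iter_seq[of J f, OF continuous maps_into] _ assms]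
    iter_seq_in[of f J, OF maps_into]
  by blast

lemma weakly_mixing_refine:
  assumes wm: "weakly_mixing J f"
    and "openin (top_of_set J) U1" "U1 \<noteq> {}" "openin (top_of_set J) V1" "V1 \<noteq> {}"
    and "openin (top_of_set J) U2" "U2 \<noteq> {}" "openin (top_of_set J) V2" "V2 \<noteq> {}"
  obtains U V where "openin (top_of_set J) U" "U \<noteq> {}" "U \<subseteq> U1"
    and "openin (top_of_set J) V" "V \<noteq> {}" "V \<subseteq> V1"
    and "\<And>n. iter_seq f n ` U \<inter> V \<noteq> {} \<Longrightarrow> iter_seq f n ` U2 \<inter> V2 \<noteq> {}"
proof -
  obtain t where t: "iter_seq f t ` U1 \<inter> U2 \<noteq> {}" "iter_seq f t ` V1 \<inter> V2 \<noteq> {}"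
    using wm[unfolded weakly_mixing_def, rule_format, of U1 V1 U2 V2] assms by blast
  define U where "U = U1 \<inter> (J \<inter> iter_seq f t -` U2)"
  define V where "V = V1 \<inter> (J \<inter> iter_seq f t -` V2)"
  have "U1 \<subseteq> J" "V1 \<subseteq> J" using assms openin_imp_subset by auto
  show ?thesis
  proof (rule that[of U V])
    show "openin (top_of_set J) U" "openin (top_of_set J) V"
      unfolding U_def V_def using assms openin_preimage_iter_seq by blast+
    show "U \<noteq> {}" "V \<noteq> {}"
      using t \<open>U1 \<subseteq> J\<close> \<open>V1 \<subseteq> J\<close> unfolding U_def V_def by auto
    show "U \<subseteq> U1" "V \<subseteq> V1" unfolding U_def V_def by auto
  next
    fix n assume "iter_seq f n ` U \<inter> V \<noteq> {}"
    then obtain y where y: "y \<in> U" "iter_seq f n y \<in> V" by auto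
    have "iter_seq f n (iter_seq f t y) = iter_seq f t (iter_seq f n y)"
      using iter_seq_commute[OF commutative maps_into] y unfolding U_def by auto
    then show "iter_seq f n ` U2 \<inter> V2 \<noteq> {}"
      using y unfolding U_def V_def by (metis IntD2 IntI empty_iff image_eqI vimageD)
  qed
qed

lemma weakly_mixing_finite_family:
  assumes wm: "weakly_mixing J f" and "finite I"
    and "\<And>i. i \<in> I \<Longrightarrow> openin (top_of_set J) (U i) \<and> U i \<noteq> {}
                       \<and> openin (top_of_set J) (V i) \<and> V i \<noteq> {}"
  shows "\<exists>n\<ge>1. \<forall>i\<in>I. iter_seq f n ` U i \<inter> V i \<noteq> {}"
  using assms(2,3)
proof (induction I arbitrary: U V rule: finite_induct)
  case empty
  then show ?case by blast
next
  case (insert j F)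
  show ?case
  proof (cases "F = {}")
    case True
    then show ?thesis
      using wm[unfolded weakly_mixing_def, rule_format, of "U j" "U j" "V j" "V j"] insert.prems
      by auto
  next
    case False
    then obtain k where "k \<in> F" by blast
    obtain U0 V0 where U0: "openin (top_of_set J) U0" "U0 \<noteq> {}" "U0 \<subseteq> U k"
      and V0: "openin (top_of_set J) V0" "V0 \<noteq> {}" "V0 \<subseteq> V k"
      and merged: "\<And>n. iter_seq f n ` U0 \<inter> V0 \<noteq> {} \<Longrightarrow> iter_seq f n ` U j \<inter> V j \<noteq> {}"
      using weakly_mixing_refine[OF wm, of "U k" "V k" "U j" "V j"] insert.prems \<open>k \<in> F\<close>
      by (metis insertCI)
    have "\<exists>n\<ge>1. \<forall>i\<in>F. iter_seq f n ` (U(k := U0)) i \<inter> (V(k := V0)) i \<noteq> {}"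
      by (rule insert.IH) (use insert.prems U0 V0 in auto)
    then obtain n where "n \<ge> 1"
      and n: "\<forall>i\<in>F. iter_seq f n ` (U(k := U0)) i \<inter> (V(k := V0)) i \<noteq> {}"
      by blast
    have refined: "iter_seq f n ` U0 \<inter> V0 \<noteq> {}"
      using n \<open>k \<in> F\<close> by (metis fun_upd_same)
    have "iter_seq f n ` U i \<inter> V i \<noteq> {}" if i: "i \<in> insert j F" for i
    proof -
      consider "i = j" | "i = k" | "i \<in> F" "i \<noteq> k" using i by blast
      then show ?thesis
      proof cases
        case 1
        then show ?thesis using merged[OF refined] by simp
      next
        case 2
        have "iter_seq f n ` U0 \<inter> V0 \<subseteq> iter_seq f n ` U k \<inter> V k"
          using U0(3) V0(3) by auto
        then show ?thesis using refined 2 by auto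
      next
        case 3
        then have "iter_seq f n ` (U(k := U0)) i \<inter> (V(k := V0)) i \<noteq> {}" using n by blast
        then show ?thesis using \<open>i \<noteq> k\<close> by simp
      qed
    qed
    then show ?thesis using \<open>n \<ge> 1\<close> by blast
  qed
qed

end

locale periodic_commuting_system = commuting_system +
  fixes m :: nat
  assumes surjective: "\<And>n. n \<ge> 1 \<Longrightarrow> f n ` J = J"
    and periodic: "periodic_seq J m f"
begin

lemma weakly_mixing_finite_family_period_multiple:
  assumes wm: "weakly_mixing J f" and "finite I"
    and opens: "\<And>i. i \<in> I \<Longrightarrow> openin (top_of_set J) (U i) \<and> U i \<noteq> {}
                                \<and> openin (top_of_set J) (V i) \<and> V i \<noteq> {}"
  shows "\<exists>N\<ge>1. m dvd N \<and> (\<forall>i\<in>I. iter_seq f N ` U i \<inter> V i \<noteq> {})"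
proof -
  have "m \<ge> 1" using periodic unfolding periodic_seq_def by simp
  \<comment> \<open>By periodicity, g r continues any orbit at a time \<open>\<equiv> r (mod m)\<close> up to the next multiple of m.\<close>
  define g where "g r = iter_seq (\<lambda>k. f (r + k)) (m - r)" for r
  have g_maps_into: "g r ` J \<subseteq> J" for r
    unfolding g_def
    by (intro image_subsetI iter_seq_in[of "\<lambda>k. f (r + k)" J])
      (simp_all add: maps_into[unfolded image_subset_iff])
  have g_surjective: "g r ` J = J" for r
    unfolding g_def by (rule iter_seq_image) (simp add: surjective)
  have g_continuous: "continuous_on J (g r)" for r
    unfolding g_def by (rule continuous_on_iter_seq) (simp_all add: continuous maps_into)
  define P where "P r W = J \<inter> g r -` W" for r W
  have P: "openin (top_of_set J) (P r W) \<and> P r W \<noteq> {}"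
    if W: "openin (top_of_set J) W" "W \<noteq> {}" for r W
  proof
    show "openin (top_of_set J) (P r W)"
      unfolding P_def using continuous_openin_preimage[OF g_continuous _ W(1)] g_maps_into by blast
    obtain w where "w \<in> W" using W(2) by blast
    moreover have "W \<subseteq> g r ` J" using g_surjective openin_imp_subset[OF W(1)] by simp
    ultimately show "P r W \<noteq> {}" unfolding P_def by blast
  qed
  have "\<exists>n\<ge>1. \<forall>(i, r)\<in>I \<times> {..<m}. iter_seq f n ` U i \<inter> P r (V i) \<noteq> {}"
    using weakly_mixing_finite_family[OF wm, of "I \<times> {..<m}" "\<lambda>(i, r). U i" "\<lambda>(i, r). P r (V i)"]
      \<open>finite I\<close> opens P
    by (simp add: case_prod_beta mem_Times_iff)
  then obtain n where n: "\<forall>(i, r)\<in>I \<times> {..<m}. iter_seq f n ` U i \<inter> P r (V i) \<noteq> {}"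
    by blast
  define N where "N = n + (m - n mod m)"
  have "n div m * m + n mod m = n" by simp
  moreover have "n mod m < m" using \<open>m \<ge> 1\<close> by simp
  ultimately have N_eq: "N = (n div m + 1) * m" unfolding N_def distrib_right by linarith
  then have "m dvd N" by simp
  have N_step: "iter_seq f N y = g (n mod m) (iter_seq f n y)" if "y \<in> J" for y
    using iter_seq_add_periodic[OF periodic maps_into that] unfolding N_def g_def by simp
  have "iter_seq f N ` U i \<inter> V i \<noteq> {}" if "i \<in> I" for i
  proof -
    have "(i, n mod m) \<in> I \<times> {..<m}" using that \<open>m \<ge> 1\<close> by simp
    then obtain y where "y \<in> U i" "iter_seq f n y \<in> P (n mod m) (V i)" using n by fast
    moreover have "y \<in> J" using \<open>y \<in> U i\<close> opens[OF that] openin_imp_subset by blast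
    ultimately show ?thesis using N_step unfolding P_def by auto
  qed
  moreover have "N \<ge> 1" using N_eq \<open>m \<ge> 1\<close> by simp
  ultimately show ?thesis using \<open>m dvd N\<close> by blast
qed

lemma dense_periodic_points:
  assumes "nondegenerate_interval J" and wm: "weakly_mixing J f"
  shows "J \<subseteq> closure {x \<in> J. periodic_point f x}"
proof
  fix x0 assume "x0 \<in> J"
  show "x0 \<in> closure {x \<in> J. periodic_point f x}"
    unfolding closure_approachable
  proof (intro allI impI)
    fix e :: real assume "e > 0"
    obtain u v where "u < v" "{u..v} \<subseteq> J" "{u..v} \<subseteq> ball x0 e"
      using nondegenerate_interval_segment_near[OF assms(1) \<open>x0 \<in> J\<close> \<open>e > 0\<close>] by blast
    define w where "w = (v - u) / 4"
    define L where "L = {u<..<u + w}"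
    define I where "I = {u + w<..<v - w}"
    define R where "R = {v - w<..<v}"
    have "w > 0" "v = u + 4 * w" using \<open>u < v\<close> unfolding w_def by (simp_all add: field_simps)
    have subsegment: "L \<subseteq> {u..v}" "I \<subseteq> {u..v}" "R \<subseteq> {u..v}"
      using \<open>w > 0\<close> \<open>v = u + 4 * w\<close> unfolding L_def I_def R_def by auto
    have "openin (top_of_set J) Z \<and> Z \<noteq> {}" if "Z \<in> {L, I, R}" for Z
    proof
      show "openin (top_of_set J) Z"
        using that subsegment \<open>{u..v} \<subseteq> J\<close>
        by (intro open_subset) (auto simp: L_def I_def R_def)
      show "Z \<noteq> {}"
        using that \<open>w > 0\<close> \<open>v = u + 4 * w\<close> unfolding L_def I_def R_def by auto
    qed
    then obtain N where "N \<ge> 1" "m dvd N"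
      and hits: "\<forall>b\<in>UNIV. iter_seq f N ` I \<inter> (if b then L else R) \<noteq> {}"
      using weakly_mixing_finite_family_period_multiple[OF wm, of UNIV "\<lambda>_. I"
          "\<lambda>b. if b then L else R"]
      by auto
    have "iter_seq f N ` I \<inter> L \<noteq> {}" "iter_seq f N ` I \<inter> R \<noteq> {}"
      using hits[rule_format, of True] hits[rule_format, of False] by simp_all
    then obtain y1 y2 where "y1 \<in> I" "iter_seq f N y1 \<in> L" "y2 \<in> I" "iter_seq f N y2 \<in> R"
      by blast
    then have below: "iter_seq f N y1 \<le> y1" and above: "y2 \<le> iter_seq f N y2"
      unfolding L_def I_def R_def by auto
    have "closed_segment y1 y2 \<subseteq> I"
      using \<open>y1 \<in> I\<close> \<open>y2 \<in> I\<close> unfolding I_def by (intro closed_segment_subset) auto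
    moreover have "I \<subseteq> J" using subsegment \<open>{u..v} \<subseteq> J\<close> by blast
    ultimately have "continuous_on (closed_segment y1 y2) (iter_seq f N)"
      using continuous_on_subset[OF continuous_on_iter_seq[of J f, OF continuous maps_into]] by blast
    then obtain x where "x \<in> closed_segment y1 y2" "iter_seq f N x = x"
      using fixed_point_in_segment below above by blast
    with \<open>closed_segment y1 y2 \<subseteq> I\<close> have "x \<in> I" "iter_seq f N x = x" by auto
    then have "periodic_point f x"
      using periodic_pointI[OF periodic maps_into \<open>m dvd N\<close> \<open>N \<ge> 1\<close>] \<open>I \<subseteq> J\<close> by blast
    moreover have "dist x x0 < e"
      using \<open>x \<in> I\<close> subsegment \<open>{u..v} \<subseteq> ball x0 e\<close> by (auto simp: dist_commute)
    ultimately show "\<exists>x\<in>{x \<in> J. periodic_point f x}. dist x x0 < e"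
      using \<open>x \<in> I\<close> \<open>I \<subseteq> J\<close> by blast
  qed
qed

end

theorem mainTheorem16:
  fixes J :: "real set" and f :: "nat \<Rightarrow> real \<Rightarrow> real" and m :: nat
  assumes "nondegenerate_interval J"
    and "\<And>n. n \<ge> 1 \<Longrightarrow> continuous_on J (f n)"
    and "\<And>n. n \<ge> 1 \<Longrightarrow> f n ` J = J"
    and "commutative_seq J f"
    and "periodic_seq J m f"
    and "weakly_mixing J f"
  shows "devaney_chaotic J f"
proof -
  interpret periodic_commuting_system J f m
    by unfold_locales (use assms in auto)
  obtain a b where "a \<in> J" "b \<in> J" "a < b"
    using assms(1) unfolding nondegenerate_interval_def by blast
  then show ?thesis
    unfolding devaney_chaotic_def
    using weakly_mixing_imp_top_transitive weakly_mixing_imp_sensitive dense_periodic_points assms(1,6)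
    by blast
qed

end
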